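(* Let $G=(V,E,\boldsymbol{X})$ be a connected graph with at least two nodes, node features $\boldsymbol{x}_v\in\mathbb{R}^d$, a finite label set $\mathcal{Y}=\{1,\dots,|\mathcal{Y}|\}$, a nonempty set $V_{\text{train}}\subset V$ of labeled nodes with one-hot labels $\boldsymbol{y}_v$, and $V_{\text{test}}=V\setminus V_{\text{train}}$. Consider the TFGNN with $L$ layers $$\boldsymbol{h}^{(0)}_v=[\boldsymbol{x}_v;\tilde{\boldsymbol{y}}_v],$$ $$\boldsymbol{h}^{(l)}_v=\begin{cases}\mathrm{ReLU}\big(\boldsymbol{S}^{(l)}\boldsymbol{h}^{(l-1)}_v+\frac{1}{|\mathcal{N}(v)|}\sum_{u\in\mathcal{N}(v)}\boldsymbol{V}^{(l)}\boldsymbol{h}^{(l-1)}_u\big) & (v\in V_{\text{train}}),\\ \mathrm{ReLU}\big(\boldsymbol{T}^{(l)}\boldsymbol{h}^{(l-1)}_v+\frac{1}{|\mathcal{N}(v)|}\sum_{u\in\mathcal{N}(v)}\boldsymbol{W}^{(l)}\boldsymbol{h}^{(l-1)}_u\big) & (v\in V_{\text{test}}),\end{cases}\quad l\in[L],$$ $$\hat{\boldsymbol{y}}_v=\mathrm{softmax}(\boldsymbol{U}\boldsymbol{h}^{(L)}_v),$$ where, with $m=1+|\mathcal{Y}|$, the parameters satisfy for all $l\in[L]$: $\boldsymbol{S}^{(l)}_{-m:,:-m}=0$, $\boldsymbol{S}^{(l)}_{-m:,-m:}=\boldsymbol{I}_m$, $\boldsymbol{V}^{(l)}_{-m:}=0$,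 $\boldsymbol{T}^{(l)}_{-m:}=0$, $\boldsymbol{W}^{(l)}_{-m:,:-m}=0$, $\boldsymbol{W}^{(l)}_{-m:,-m:}=\boldsymbol{I}_m$, and $\boldsymbol{U}_{:,:-|\mathcal{Y}|}=0$, $\boldsymbol{U}_{:,-|\mathcal{Y}|:}=\boldsymbol{I}_{|\mathcal{Y}|}$, all other entries being arbitrary. Then for every $v\in V$ and $i\in\mathcal{Y}$, $$\boldsymbol{h}^{(L)}_{v,-(|\mathcal{Y}|-i+1)}=p_{L,v,i},\qquad \operatorname{argmax}_i\hat{\boldsymbol{y}}_{vi}=\operatorname{argmax}_i p_{L,v,i},$$ and, for $v\in V_{\text{test}}$, $p_{L,v,i}\to\hat{\boldsymbol{y}}^{\text{LP}}_{v,i}$ as $L\to\infty$.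
   Context: Numpy-like indexing: for a matrix $\boldsymbol{M}$, $\boldsymbol{M}_{-m:,:}$ (written $\boldsymbol{M}_{-m:}$) is its last $m$ rows, $\boldsymbol{M}_{:,-m:}$ its last $m$ columns, $\boldsymbol{M}_{:,:-m}$ all columns except the last $m$, and $\boldsymbol{h}_{-j}$ is the $j$-th entry from the end of a vector $\boldsymbol{h}$. $\mathcal{N}(v)$ is the set of neighbors of $v$. The label feature is $\tilde{\boldsymbol{y}}_v=[1;\boldsymbol{y}_v]$ for $v\in V_{\text{train}}$ and $\tilde{\boldsymbol{y}}_v=\mathbf{0}_{1+|\mathcal{Y}|}$ for $v\in V_{\text{test}}$, so $\boldsymbol{h}^{(0)}_v\in\mathbb{R}^{d+1+|\mathcal{Y}|}$; each $\boldsymbol{h}^{(l)}_v\in\mathbb{R}^{D_l}$ with $D_0=d+1+|\mathcal{Y}|$ and $D_l\ge 1+|\mathcal{Y}|$, the matrices $\boldsymbol{S}^{(l)},\boldsymbol{T}^{(l)},\boldsymbol{V}^{(l)},\boldsymbol{W}^{(l)}\in\mathbb{R}^{D_l\times D_{l-1}}$ and $\boldsymbol{U}\in\mathbb{R}^{|\mathcal{Y}|\times D_L}$. The one-hot vector $\boldsymbol{y}_v$ has its $i$-th coordinate equal to $1$ iff $v$ has label $i$. Define $p_{l,v,i}$ as the probability that a simple random walk started at $v$ (each step moves to a uniformly random neighbor) hits $V_{\text{train}}$ within $l$ steps and the first node of $V_{\text{train}}$ it hits has label $i$ (so $p_{l,v,i}=1[i=\text{label of } v]$ for $v\in V_{\text{train}}$).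 Label propagation output: $\hat{\boldsymbol{y}}^{\text{LP}}_{v,i}$ is the probability that the first node of $V_{\text{train}}$ hit by a simple random walk from $v$ has label $i$. *)

theory Defs
  imports Complex_Main
begin

definition nbrs :: "('a \<Rightarrow> 'a \<Rightarrow> bool) \<Rightarrow> 'a set \<Rightarrow> 'a \<Rightarrow> 'a set" where
  "nbrs E VV v = {u \<in> VV. E v u}"

definition simple_graph :: "('a \<Rightarrow> 'a \<Rightarrow> bool) \<Rightarrow> 'a set \<Rightarrow> bool" where
  "simple_graph E VV \<longleftrightarrow> finite VV \<and> (\<forall>u v. E u v \<longrightarrow> u \<in> VV \<and> v \<in> VV)
     \<and> (\<forall>u v. E u v \<longrightarrow> E v u) \<and> (\<forall>v. \<not> E v v)"

definition connected_graph :: "('a \<Rightarrow> 'a \<Rightarrow> bool) \<Rightarrow> 'a set \<Rightarrow> bool" where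
  "connected_graph E VV \<longleftrightarrow> (\<forall>u\<in>VV. \<forall>v\<in>VV. E\<^sup>*\<^sup>* u v)"

text \<open>Walks of exactly k steps from v (as vertex lists of length k+1) whose
  first k vertices are outside the training set and whose last vertex lies in it,
  i.e. the walks that first hit the training set at step k.\<close>

definition first_hit_walks ::
  "('a \<Rightarrow> 'a \<Rightarrow> bool) \<Rightarrow> 'a set \<Rightarrow> 'a set \<Rightarrow> nat \<Rightarrow> 'a \<Rightarrow> 'a list set" where
  "first_hit_walks E VV Tr k v = {ws. length ws = Suc k \<and> set ws \<subseteq> VV \<and> ws ! 0 = v
      \<and> (\<forall>j<k. E (ws ! j) (ws ! Suc j)) \<and> (\<forall>j<k. ws ! j \<notin> Tr) \<and> ws ! k \<in> Tr}"

text \<open>Probability of a walk prefix under the simple random walk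
  (each step to a uniformly random neighbor).\<close>

definition walk_prob :: "('a \<Rightarrow> 'a \<Rightarrow> bool) \<Rightarrow> 'a set \<Rightarrow> 'a list \<Rightarrow> real" where
  "walk_prob E VV ws = (\<Prod>j<length ws - 1. 1 / real (card (nbrs E VV (ws ! j))))"

definition hit_prob_exact ::
  "('a \<Rightarrow> 'a \<Rightarrow> bool) \<Rightarrow> 'a set \<Rightarrow> 'a set \<Rightarrow> ('a \<Rightarrow> nat) \<Rightarrow> nat \<Rightarrow> 'a \<Rightarrow> nat \<Rightarrow> real" where
  "hit_prob_exact E VV Tr lab k v i =
     (\<Sum>ws\<in>{ws \<in> first_hit_walks E VV Tr k v. lab (ws ! k) = i}. walk_prob E VV ws)"

text \<open>p_{l,v,i}: probability of hitting the training set within l steps with first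
  hit node of label i.\<close>

definition p_hit :: "('a \<Rightarrow> 'a \<Rightarrow> bool) \<Rightarrow> 'a set \<Rightarrow> 'a set \<Rightarrow> ('a \<Rightarrow> nat) \<Rightarrow> nat \<Rightarrow> 'a \<Rightarrow> nat \<Rightarrow> real" where
  "p_hit E VV Tr lab l v i = (\<Sum>k\<le>l. hit_prob_exact E VV Tr lab k v i)"

text \<open>Label propagation output: probability that the first training node hit by the
  random walk from v has label i (countable additivity over the hitting time).\<close>

definition y_LP :: "('a \<Rightarrow> 'a \<Rightarrow> bool) \<Rightarrow> 'a set \<Rightarrow> 'a set \<Rightarrow> ('a \<Rightarrow> nat) \<Rightarrow> 'a \<Rightarrow> nat \<Rightarrow> real" where
  "y_LP E VV Tr lab v i = (\<Sum>k. hit_prob_exact E VV Tr lab k v i)"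

text \<open>Vectors are functions nat \<Rightarrow> real (0-based coordinates, meaningful below the
  dimension); matrices are functions row \<Rightarrow> col \<Rightarrow> real; a layer-indexed matrix family
  is nat \<Rightarrow> nat \<Rightarrow> nat \<Rightarrow> real (layer, row, column). Labels are 1..K.\<close>

definition relu :: "real \<Rightarrow> real" where
  "relu x = max 0 x"

text \<open>Input h^(0)_v = [x_v; y~_v] with y~_v = [1; y_v] on training nodes and 0 otherwise.
  Coordinates 0..d-1: features; coordinate d: the indicator 1; coordinate d+i: label i.\<close>

definition tf_input :: "'a set \<Rightarrow> ('a \<Rightarrow> nat) \<Rightarrow> nat \<Rightarrow> ('a \<Rightarrow> nat \<Rightarrow> real) \<Rightarrow> 'a \<Rightarrow> nat \<Rightarrow> real" where
  "tf_input Tr lab d x v j =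
     (if j < d then x v j
      else if v \<in> Tr then (if j = d then 1 else if lab v = j - d then 1 else 0)
      else 0)"

fun tfgnn_h ::
  "('a \<Rightarrow> 'a \<Rightarrow> bool) \<Rightarrow> 'a set \<Rightarrow> 'a set \<Rightarrow> ('a \<Rightarrow> nat) \<Rightarrow> nat \<Rightarrow> ('a \<Rightarrow> nat \<Rightarrow> real) \<Rightarrow> (nat \<Rightarrow> nat)
   \<Rightarrow> (nat \<Rightarrow> nat \<Rightarrow> nat \<Rightarrow> real) \<Rightarrow> (nat \<Rightarrow> nat \<Rightarrow> nat \<Rightarrow> real)
   \<Rightarrow> (nat \<Rightarrow> nat \<Rightarrow> nat \<Rightarrow> real) \<Rightarrow> (nat \<Rightarrow> nat \<Rightarrow> nat \<Rightarrow> real)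
   \<Rightarrow> nat \<Rightarrow> 'a \<Rightarrow> nat \<Rightarrow> real" where
  "tfgnn_h E VV Tr lab d x D S T Vm W 0 v = tf_input Tr lab d x v"
| "tfgnn_h E VV Tr lab d x D S T Vm W (Suc l) v = (\<lambda>j.
     (if v \<in> Tr then
        relu ((\<Sum>c<D l. S (Suc l) j c * tfgnn_h E VV Tr lab d x D S T Vm W l v c)
          + (1 / real (card (nbrs E VV v))) *
            (\<Sum>u\<in>nbrs E VV v. \<Sum>c<D l. Vm (Suc l) j c * tfgnn_h E VV Tr lab d x D S T Vm W l u c))
      else
        relu ((\<Sum>c<D l. T (Suc l) j c * tfgnn_h E VV Tr lab d x D S T Vm W l v c)
          + (1 / real (card (nbrs E VV v))) *
            (\<Sum>u\<in>nbrs E VV v. \<Sum>c<D l. W (Suc l) j c * tfgnn_h E VV Tr lab d x D S T Vm W l u c))))"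

definition softmax :: "nat \<Rightarrow> (nat \<Rightarrow> real) \<Rightarrow> nat \<Rightarrow> real" where
  "softmax K z i = exp (z i) / (\<Sum>j\<in>{1..K}. exp (z j))"

text \<open>Set of maximizers (argmax, as a set to account for ties) over labels 1..K.\<close>

definition argmax_set :: "nat \<Rightarrow> (nat \<Rightarrow> real) \<Rightarrow> nat set" where
  "argmax_set K f = {i \<in> {1..K}. \<forall>j\<in>{1..K}. f j \<le> f i}"

text \<open>Block conditions on a D_l x D_(l-1) matrix M with m = 1+K:
  last m rows are zero on the first D_(l-1)-m columns / identity on the last m columns / zero.\<close>

definition last_rows_zero_left :: "nat \<Rightarrow> nat \<Rightarrow> nat \<Rightarrow> (nat \<Rightarrow> nat \<Rightarrow> real) \<Rightarrow> bool" where
  "last_rows_zero_left m R C M \<longleftrightarrow> (\<forall>r c. R - m \<le> r \<and> r < R \<and> c < C - m \<longrightarrow> M r c = 0)"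

definition last_rows_identity_right :: "nat \<Rightarrow> nat \<Rightarrow> nat \<Rightarrow> (nat \<Rightarrow> nat \<Rightarrow> real) \<Rightarrow> bool" where
  "last_rows_identity_right m R C M \<longleftrightarrow> (\<forall>r c. R - m \<le> r \<and> r < R \<and> C - m \<le> c \<and> c < C \<longrightarrow>
      M r c = (if r - (R - m) = c - (C - m) then 1 else 0))"

definition last_rows_zero :: "nat \<Rightarrow> nat \<Rightarrow> nat \<Rightarrow> (nat \<Rightarrow> nat \<Rightarrow> real) \<Rightarrow> bool" where
  "last_rows_zero m R C M \<longleftrightarrow> (\<forall>r c. R - m \<le> r \<and> r < R \<and> c < C \<longrightarrow> M r c = 0)"

end

theory Submission
  imports Defs
begin

text \<open>The last 1 + K coordinates of the hidden state evolve independently of the features: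
  on a training node S copies them and V kills the neighbour term; on a test node T kills
  them and W averages them over the neighbours. The values stay nonnegative, so ReLU acts as
  the identity, and the label coordinates obey the first-step recursion of the hitting
  probabilities: p(l+1, v) = p(l, v) on training nodes, and p(l+1, v) is the mean of p(l, u)
  over the neighbours u of a test node v. U reads off these coordinates and softmax is
  monotone, which gives the argmax claim. Finally p(L, v) is a partial sum of the series of
  nonnegative terms defining y_LP and is bounded by 1, hence converges to it.\<close>

lemma finite_first_hit_walks:
  assumes "finite VV"
  shows "finite (first_hit_walks E VV Tr k v)"
proof (rule finite_subset)
  show "first_hit_walks E VV Tr k v \<subseteq> {ws. set ws \<subseteq> VV \<and> length ws = Suc k}"
    by (auto simp: first_hit_walks_def)
  show "finite {ws. set ws \<subseteq> VV \<and> length ws = Suc k}"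
    using assms by (rule finite_lists_length_eq)
qed

lemma first_hit_walks_0:
  assumes "Tr \<subseteq> VV"
  shows "first_hit_walks E VV Tr 0 v = (if v \<in> Tr then {[v]} else {})"
  using assms by (auto simp: first_hit_walks_def length_Suc_conv)

lemma first_hit_walks_Suc_train:
  assumes "v \<in> Tr"
  shows "first_hit_walks E VV Tr (Suc k) v = {}"
  using assms by (auto simp: first_hit_walks_def)

lemma first_hit_walks_Suc:
  assumes "simple_graph E VV" and "v \<notin> Tr"
  shows "first_hit_walks E VV Tr (Suc k) v = Cons v ` (\<Union>u\<in>nbrs E VV v. first_hit_walks E VV Tr k u)"
proof (intro equalityI subsetI)
  fix ws assume ws: "ws \<in> first_hit_walks E VV Tr (Suc k) v"
  then obtain ws' where ws_eq: "ws = v # ws'"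
    by (cases ws) (auto simp: first_hit_walks_def)
  with ws have "ws' \<in> first_hit_walks E VV Tr k (ws' ! 0)" "ws' ! 0 \<in> nbrs E VV v"
    by (fastforce simp: first_hit_walks_def nbrs_def)+
  with ws_eq show "ws \<in> Cons v ` (\<Union>u\<in>nbrs E VV v. first_hit_walks E VV Tr k u)" by blast
next
  fix ws assume "ws \<in> Cons v ` (\<Union>u\<in>nbrs E VV v. first_hit_walks E VV Tr k u)"
  then obtain u ws' where u: "u \<in> nbrs E VV v" and ws': "ws' \<in> first_hit_walks E VV Tr k u"
    and ws_eq: "ws = v # ws'" by blast
  have "v \<in> VV" using u assms(1) by (auto simp: nbrs_def simple_graph_def)
  with u ws' assms(2) show "ws \<in> first_hit_walks E VV Tr (Suc k) v"
    unfolding ws_eq first_hit_walks_def nbrs_def by (auto simp: nth_Cons' less_Suc_eq_0_disj)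
qed

lemma walk_prob_Cons:
  assumes "ws \<noteq> []"
  shows "walk_prob E VV (v # ws) = walk_prob E VV ws / real (card (nbrs E VV v))"
proof -
  obtain n where "length ws = Suc n" using assms by (cases ws) auto
  then show ?thesis
    unfolding walk_prob_def by (simp add: prod.lessThan_Suc_shift del: prod.lessThan_Suc)
qed

lemma hit_prob_exact_0:
  assumes "Tr \<subseteq> VV"
  shows "hit_prob_exact E VV Tr lab 0 v i = (if v \<in> Tr \<and> lab v = i then 1 else 0)"
proof -
  have "{ws \<in> first_hit_walks E VV Tr 0 v. lab (ws ! 0) = i} = (if v \<in> Tr \<and> lab v = i then {[v]} else {})"
    using assms by (auto simp: first_hit_walks_0)
  then show ?thesis by (simp add: hit_prob_exact_def walk_prob_def)
qed

lemma hit_prob_exact_Suc_train: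
  assumes "v \<in> Tr"
  shows "hit_prob_exact E VV Tr lab (Suc k) v i = 0"
  using assms by (simp add: hit_prob_exact_def first_hit_walks_Suc_train)

lemma hit_prob_exact_Suc:
  assumes graph: "simple_graph E VV" and v: "v \<notin> Tr"
  shows "hit_prob_exact E VV Tr lab (Suc k) v i
     = (\<Sum>u\<in>nbrs E VV v. hit_prob_exact E VV Tr lab k u i) / real (card (nbrs E VV v))"
proof -
  let ?N = "nbrs E VV v"
  let ?H = "\<lambda>u. {ws \<in> first_hit_walks E VV Tr k u. lab (ws ! k) = i}"
  have fin: "finite VV" using graph by (simp add: simple_graph_def)
  have "{ws \<in> first_hit_walks E VV Tr (Suc k) v. lab (ws ! Suc k) = i} = Cons v ` (\<Union>u\<in>?N. ?H u)"
    unfolding first_hit_walks_Suc[OF graph v] by (auto simp: image_iff)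
  then have "hit_prob_exact E VV Tr lab (Suc k) v i = (\<Sum>ws\<in>(\<Union>u\<in>?N. ?H u). walk_prob E VV (v # ws))"
    by (simp add: hit_prob_exact_def sum.reindex)
  also have "\<dots> = (\<Sum>u\<in>?N. \<Sum>ws\<in>?H u. walk_prob E VV (v # ws))"
  proof (rule sum.UNION_disjoint)
    show "finite ?N" using fin by (simp add: nbrs_def)
    show "\<forall>u\<in>?N. finite (?H u)" using finite_first_hit_walks[OF fin] by simp
  qed (auto simp: first_hit_walks_def)
  also have "\<dots> = (\<Sum>u\<in>?N. \<Sum>ws\<in>?H u. walk_prob E VV ws / real (card ?N))"
    by (intro sum.cong refl walk_prob_Cons) (auto simp: first_hit_walks_def)
  finally show ?thesis
    by (simp add: hit_prob_exact_def sum_divide_distrib)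
qed

lemma hit_prob_exact_nonneg: "hit_prob_exact E VV Tr lab k v i \<ge> 0"
  unfolding hit_prob_exact_def walk_prob_def by (intro sum_nonneg prod_nonneg) auto

lemma p_hit_nonneg: "p_hit E VV Tr lab l v i \<ge> 0"
  unfolding p_hit_def by (intro sum_nonneg hit_prob_exact_nonneg)

lemma p_hit_train:
  assumes "v \<in> Tr"
  shows "p_hit E VV Tr lab l v i = hit_prob_exact E VV Tr lab 0 v i"
  using assms by (induction l) (simp_all add: p_hit_def hit_prob_exact_Suc_train)

lemma p_hit_Suc:
  assumes graph: "simple_graph E VV" and train: "Tr \<subseteq> VV"
  shows "p_hit E VV Tr lab (Suc l) v i = (if v \<in> Tr then p_hit E VV Tr lab l v i
     else (\<Sum>u\<in>nbrs E VV v. p_hit E VV Tr lab l u i) / real (card (nbrs E VV v)))"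
proof (cases "v \<in> Tr")
  case False
  have "p_hit E VV Tr lab (Suc l) v i
      = hit_prob_exact E VV Tr lab 0 v i + (\<Sum>k\<le>l. hit_prob_exact E VV Tr lab (Suc k) v i)"
    unfolding p_hit_def by (rule sum.atMost_Suc_shift)
  also have "\<dots> = (\<Sum>k\<le>l. \<Sum>u\<in>nbrs E VV v. hit_prob_exact E VV Tr lab k u i) / real (card (nbrs E VV v))"
    using False by (simp add: hit_prob_exact_0[OF train] hit_prob_exact_Suc[OF graph] sum_divide_distrib)
  finally show ?thesis
    using False by (simp add: p_hit_def sum.swap[of _ "{..l}"])
qed (simp add: p_hit_train)

lemma p_hit_le_1:
  assumes graph: "simple_graph E VV" and train: "Tr \<subseteq> VV"
  shows "p_hit E VV Tr lab l v i \<le> 1"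
proof (induction l arbitrary: v)
  case 0
  show ?case by (simp add: p_hit_def hit_prob_exact_0[OF train])
next
  case (Suc l)
  have "(\<Sum>u\<in>nbrs E VV v. p_hit E VV Tr lab l u i) \<le> (\<Sum>u\<in>nbrs E VV v. 1)"
    by (rule sum_mono) (rule Suc.IH)
  then have "(\<Sum>u\<in>nbrs E VV v. p_hit E VV Tr lab l u i) / real (card (nbrs E VV v)) \<le> 1"
    by (auto simp: divide_le_eq_1)
  then show ?case
    using Suc.IH by (simp add: p_hit_Suc[OF graph train])
qed

lemma p_hit_tendsto_y_LP:
  assumes graph: "simple_graph E VV" and train: "Tr \<subseteq> VV"
  shows "(\<lambda>L. p_hit E VV Tr lab L v i) \<longlonglongrightarrow> y_LP E VV Tr lab v i"
proof -
  have "summable (\<lambda>k. hit_prob_exact E VV Tr lab k v i)"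
  proof (rule summableI_nonneg_bounded)
    show "(\<Sum>k<n. hit_prob_exact E VV Tr lab k v i) \<le> 1" for n
    proof (cases n)
      case (Suc m)
      then have "{..<n} = {..m}" by auto
      then show ?thesis using p_hit_le_1[OF graph train] by (simp add: p_hit_def)
    qed simp
  qed (rule hit_prob_exact_nonneg)
  then show ?thesis
    unfolding p_hit_def y_LP_def by (rule summable_LIMSEQ')
qed

lemma sum_last_rows_identity:
  assumes zero: "last_rows_zero_left m R C M" and ident: "last_rows_identity_right m R C M"
    and r: "R - m \<le> r" "r < R" and m: "m \<le> C"
  shows "(\<Sum>c<C. M r c * h c) = h (C - m + (r - (R - m)))"
proof -
  let ?a = "C - m + (r - (R - m))"
  have a: "?a < C" using r m by linarith
  have "M r c = (if c = ?a then 1 else 0)" if "c < C" for c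
  proof (cases "c < C - m")
    case True
    then show ?thesis using zero r by (auto simp: last_rows_zero_left_def)
  next
    case False
    then show ?thesis using ident r that unfolding last_rows_identity_right_def by auto
  qed
  then have "(\<Sum>c<C. M r c * h c) = (\<Sum>c<C. if c = ?a then h c else 0)"
    by (intro sum.cong) auto
  also have "\<dots> = h ?a" using a by simp
  finally show ?thesis .
qed

lemma sum_last_rows_zero:
  assumes "last_rows_zero m R C M" and "R - m \<le> r" "r < R"
  shows "(\<Sum>c<C. M r c * h c) = 0"
  using assms by (simp add: last_rows_zero_def)

lemma argmax_set_cong:
  assumes "\<And>i. i \<in> {1..K} \<Longrightarrow> f i = g i"
  shows "argmax_set K f = argmax_set K g"
  using assms by (auto simp: argmax_set_def)

lemma argmax_set_softmax: "argmax_set K (softmax K z) = argmax_set K z"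
proof (cases "K = 0")
  case False
  then have "(\<Sum>j\<in>{1..K}. exp (z j)) > 0" by (intro sum_pos) auto
  then have "softmax K z j \<le> softmax K z i \<longleftrightarrow> z j \<le> z i" for i j
    by (simp add: softmax_def divide_le_cancel)
  then show ?thesis by (simp add: argmax_set_def)
qed (simp add: argmax_set_def)

lemma tfgnn_h_label_coordinate:
  assumes graph: "simple_graph E VV" and train: "Tr \<subseteq> VV"
    and D0: "D 0 = d + 1 + K"
    and Dl: "\<forall>l. D l \<ge> 1 + K"
    and S_cond: "\<forall>l\<ge>1. last_rows_zero_left (1 + K) (D l) (D (l - 1)) (S l)
                     \<and> last_rows_identity_right (1 + K) (D l) (D (l - 1)) (S l)"
    and V_cond: "\<forall>l\<ge>1. last_rows_zero (1 + K) (D l) (D (l - 1)) (Vm l)"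
    and T_cond: "\<forall>l\<ge>1. last_rows_zero (1 + K) (D l) (D (l - 1)) (T l)"
    and W_cond: "\<forall>l\<ge>1. last_rows_zero_left (1 + K) (D l) (D (l - 1)) (W l)
                     \<and> last_rows_identity_right (1 + K) (D l) (D (l - 1)) (W l)"
    and i: "i \<in> {1..K}"
  shows "tfgnn_h E VV Tr lab d x D S T Vm W L v (D L - (K - i + 1)) = p_hit E VV Tr lab L v i"
proof (induction L arbitrary: v)
  case 0
  have "D 0 - (K - i + 1) = d + i" using i D0 by auto
  then show ?case using i by (simp add: p_hit_def tf_input_def hit_prob_exact_0[OF train])
next
  case (Suc l)
  let ?h = "tfgnn_h E VV Tr lab d x D S T Vm W l"
  let ?j = "D (Suc l) - (K - i + 1)"
  have j: "D (Suc l) - (1 + K) \<le> ?j" "?j < D (Suc l)"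
    and a: "D l - (1 + K) + (?j - (D (Suc l) - (1 + K))) = D l - (K - i + 1)"
    using Dl[rule_format, of l] Dl[rule_format, of "Suc l"] i by auto
  have select: "(\<Sum>c<D l. M ?j c * ?h u c) = p_hit E VV Tr lab l u i"
    if "last_rows_zero_left (1 + K) (D (Suc l)) (D l) M
        \<and> last_rows_identity_right (1 + K) (D (Suc l)) (D l) M" for M u
  proof -
    have "(\<Sum>c<D l. M ?j c * ?h u c) = ?h u (D l - (1 + K) + (?j - (D (Suc l) - (1 + K))))"
      using that j Dl by (intro sum_last_rows_identity) auto
    then show ?thesis by (simp only: a Suc.IH)
  qed
  have self: "(\<Sum>c<D l. S (Suc l) ?j c * ?h v c) = p_hit E VV Tr lab l v i"
    using S_cond[rule_format, of "Suc l"] by (intro select) simp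
  have nbr: "(\<Sum>c<D l. W (Suc l) ?j c * ?h u c) = p_hit E VV Tr lab l u i" for u
    using W_cond[rule_format, of "Suc l"] by (intro select) simp
  have "(\<Sum>c<D l. Vm (Suc l) ?j c * ?h u c) = 0" "(\<Sum>c<D l. T (Suc l) ?j c * ?h v c) = 0" for u
    using V_cond[rule_format, of "Suc l"] T_cond[rule_format, of "Suc l"] j
    by (simp_all add: sum_last_rows_zero)
  moreover have "(\<Sum>u\<in>nbrs E VV v. p_hit E VV Tr lab l u i) / real (card (nbrs E VV v)) \<ge> 0"
    by (intro divide_nonneg_nonneg sum_nonneg p_hit_nonneg) simp_all
  ultimately show ?case
    using self nbr p_hit_nonneg[of E VV Tr lab l v i]
    by (simp add: p_hit_Suc[OF graph train] relu_def)
qed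

lemma readout_last_coordinates:
  fixes U :: "nat \<Rightarrow> nat \<Rightarrow> real" and n K :: nat
  assumes U: "\<forall>r<K. (\<forall>c<n - K. U r c = 0)
                     \<and> (\<forall>c. n - K \<le> c \<and> c < n \<longrightarrow> U r c = (if c - (n - K) = r then 1 else 0))"
    and K: "K \<le> n" and i: "i \<in> {1..K}"
  shows "(\<Sum>c<n. U (i - 1) c * h c) = h (n - (K - i + 1))"
proof -
  have "last_rows_zero_left K K n U" "last_rows_identity_right K K n U"
    using U by (auto simp: last_rows_zero_left_def last_rows_identity_right_def)
  then have "(\<Sum>c<n. U (i - 1) c * h c) = h (n - K + (i - 1 - (K - K)))"
    using K i by (intro sum_last_rows_identity) auto
  also have "n - K + (i - 1 - (K - K)) = n - (K - i + 1)"
    using K i by auto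
  finally show ?thesis .
qed

theorem proposition2:
  fixes E :: "'a \<Rightarrow> 'a \<Rightarrow> bool" and VV Tr :: "'a set"
    and lab :: "'a \<Rightarrow> nat" and K d :: nat and x :: "'a \<Rightarrow> nat \<Rightarrow> real"
    and D :: "nat \<Rightarrow> nat"
    and S T Vm W :: "nat \<Rightarrow> nat \<Rightarrow> nat \<Rightarrow> real"
    and U :: "nat \<Rightarrow> nat \<Rightarrow> nat \<Rightarrow> real"
  assumes graph: "simple_graph E VV"
    and conn: "connected_graph E VV"
    and two: "card VV \<ge> 2"
    and train: "Tr \<subseteq> VV" "Tr \<noteq> {}"
    and labels: "\<forall>v\<in>Tr. lab v \<in> {1..K}"
    and D0: "D 0 = d + 1 + K"
    and Dl: "\<forall>l. D l \<ge> 1 + K"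
    and S_cond: "\<forall>l\<ge>1. last_rows_zero_left (1 + K) (D l) (D (l - 1)) (S l)
                     \<and> last_rows_identity_right (1 + K) (D l) (D (l - 1)) (S l)"
    and V_cond: "\<forall>l\<ge>1. last_rows_zero (1 + K) (D l) (D (l - 1)) (Vm l)"
    and T_cond: "\<forall>l\<ge>1. last_rows_zero (1 + K) (D l) (D (l - 1)) (T l)"
    and W_cond: "\<forall>l\<ge>1. last_rows_zero_left (1 + K) (D l) (D (l - 1)) (W l)
                     \<and> last_rows_identity_right (1 + K) (D l) (D (l - 1)) (W l)"
    and U_cond: "\<forall>L. \<forall>r<K. (\<forall>c<D L - K. U L r c = 0)
                     \<and> (\<forall>c. D L - K \<le> c \<and> c < D L \<longrightarrow> U L r c = (if c - (D L - K) = r then 1 else 0))"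
  shows "(\<forall>L. \<forall>v\<in>VV.
            (\<forall>i\<in>{1..K}. tfgnn_h E VV Tr lab d x D S T Vm W L v (D L - (K - i + 1))
                          = p_hit E VV Tr lab L v i)
          \<and> argmax_set K (softmax K (\<lambda>i. \<Sum>c<D L. U L (i - 1) c * tfgnn_h E VV Tr lab d x D S T Vm W L v c))
            = argmax_set K (p_hit E VV Tr lab L v))
       \<and> (\<forall>v\<in>VV - Tr. \<forall>i\<in>{1..K}. (\<lambda>L. p_hit E VV Tr lab L v i) \<longlonglongrightarrow> y_LP E VV Tr lab v i)"
proof -
  have K_le_D: "K \<le> D L" for L
    using Dl[rule_format, of L] by simp
  have coord: "tfgnn_h E VV Tr lab d x D S T Vm W L v (D L - (K - i + 1)) = p_hit E VV Tr lab L v i"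
    if "i \<in> {1..K}" for L v i
    by (rule tfgnn_h_label_coordinate[OF graph train(1) D0 Dl S_cond V_cond T_cond W_cond that])
  have logits: "(\<Sum>c<D L. U L (i - 1) c * tfgnn_h E VV Tr lab d x D S T Vm W L v c)
      = p_hit E VV Tr lab L v i" if "i \<in> {1..K}" for L v i
    unfolding readout_last_coordinates[OF U_cond[THEN spec, of L] K_le_D that] by (rule coord[OF that])
  have readout: "argmax_set K (softmax K (\<lambda>i. \<Sum>c<D L. U L (i - 1) c * tfgnn_h E VV Tr lab d x D S T Vm W L v c))
      = argmax_set K (p_hit E VV Tr lab L v)" for L v
    unfolding argmax_set_softmax by (intro argmax_set_cong logits)
  show ?thesis
    using coord readout p_hit_tendsto_y_LP[OF graph train(1)] by blast
qed

end
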